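(* Let $V$ be a finite-dimensional real vector space and $\mathcal{C} \subset V$ a proper cone. Then \[ \gamma(\mathcal{C}) = \sup_{K \text{ sole of } \mathcal{C}} \gamma_{\mathrm{aff}}(K). \]
   Context: A convex cone $\mathcal{C} \subset V$ is proper if it is closed, salient ($\mathcal{C} \cap (-\mathcal{C}) = \{0\}$) and generating ($\mathcal{C} - \mathcal{C} = V$). Its dual cone is $\mathcal{C}^* = \{f \in V^* : f(x) \geq 0 \text{ for all } x \in \mathcal{C}\}$. A sole of $\mathcal{C}$ is a set $\{x \in \mathcal{C} : f(x) = \alpha\}$ with $f \in \mathrm{int}(\mathcal{C}^* )$ and $\alpha > 0$; it is a convex body in the affine hyperplane $\{f = \alpha\}$. A linear map $\Psi : V \to V$ is $\mathcal{C}$-positive if $\Psi(\mathcal{C}) \subset \mathcal{C}$, strictly $\mathcal{C}$-positive if $\Psi(\mathcal{C}\setminus\{0\}) \subset \mathrm{int}(\mathcal{C})$, and $\mathcal{C}$-primitive if it is $\mathcal{C}$-positive and some power $\Psi^k$ ($k \geq 1$) is strictly $\mathcal{C}$-positive; the smallest such $k$ is $\gamma(\mathcal{C},\Psi)$, and the maximal exponent $\gamma(\mathcal{C})$ is the supremum of $\gamma(\mathcal{C},\Psi)$ over all $\mathcal{C}$-primitive $\Psi$. For a convex body $K$ (compact convex set with nonempty interior) in a finite-dimensional affine space $W$, an affine map $\Phi : W \to W$ is $K$-positive if $\Phi(K) \subset K$, strictly $K$-positive if $\Phi(K) \subset \mathrm{int}(K)$, $K$-primitive if it is $K$-positive and some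 $\Phi^k$ ($k\ge 1$) is strictly $K$-positive; the smallest such $k$ is $\gamma_{\mathrm{aff}}(K,\Phi)$, and $\gamma_{\mathrm{aff}}(K)$ is the supremum of $\gamma_{\mathrm{aff}}(K,\Phi)$ over all $K$-primitive affine maps $\Phi : W \to W$ (with $W$ the affine hyperplane containing the sole). *)

theory Defs
  imports "HOL-Analysis.Analysis" "HOL-Library.Extended_Nat"
begin

text \<open>V is modelled by a type 'a :: euclidean_space (a finite-dimensional real
  inner product space; every finite-dimensional real vector space is of this form).
  Linear functionals f on V are represented (Riesz) by vectors u, with f(x) = u \<bullet> x.\<close>

definition proper_cone :: "'a::euclidean_space set \<Rightarrow> bool" where
  "proper_cone C \<longleftrightarrow> convex C \<and> cone C \<and> closed C \<and> C \<inter> uminus ` C = {0}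
     \<and> {x - y | x y. x \<in> C \<and> y \<in> C} = UNIV"

definition dual_cone :: "'a::euclidean_space set \<Rightarrow> 'a set" where
  "dual_cone C = {u. \<forall>x\<in>C. u \<bullet> x \<ge> 0}"

definition soles :: "'a::euclidean_space set \<Rightarrow> 'a set set" where
  "soles C = {K. \<exists>u \<alpha>. u \<in> interior (dual_cone C) \<and> \<alpha> > 0 \<and> K = {x \<in> C. u \<bullet> x = \<alpha>}}"

definition cone_positive :: "'a::euclidean_space set \<Rightarrow> ('a \<Rightarrow> 'a) \<Rightarrow> bool" where
  "cone_positive C \<Psi> \<longleftrightarrow> \<Psi> ` C \<subseteq> C"

definition strictly_cone_positive :: "'a::euclidean_space set \<Rightarrow> ('a \<Rightarrow> 'a) \<Rightarrow> bool" where
  "strictly_cone_positive C \<Psi> \<longleftrightarrow> \<Psi> ` (C - {0}) \<subseteq> interior C"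

definition cone_primitive :: "'a::euclidean_space set \<Rightarrow> ('a \<Rightarrow> 'a) \<Rightarrow> bool" where
  "cone_primitive C \<Psi> \<longleftrightarrow> linear \<Psi> \<and> cone_positive C \<Psi>
     \<and> (\<exists>k\<ge>1. strictly_cone_positive C (\<Psi> ^^ k))"

definition gamma_map :: "'a::euclidean_space set \<Rightarrow> ('a \<Rightarrow> 'a) \<Rightarrow> nat" where
  "gamma_map C \<Psi> = (LEAST k. k \<ge> 1 \<and> strictly_cone_positive C (\<Psi> ^^ k))"

definition gamma_cone :: "'a::euclidean_space set \<Rightarrow> enat" where
  "gamma_cone C = (SUP \<Psi> \<in> {\<Psi>. cone_primitive C \<Psi>}. enat (gamma_map C \<Psi>))"

definition affine_self_map :: "'a::euclidean_space set \<Rightarrow> ('a \<Rightarrow> 'a) \<Rightarrow> bool" where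
  "affine_self_map W \<Phi> \<longleftrightarrow> \<Phi> ` W \<subseteq> W \<and>
     (\<exists>L b. linear L \<and> (\<forall>x\<in>W. \<Phi> x = L x + b))"

text \<open>For a convex body K in the affine space W = affine hull K, int(K) is the
  interior relative to W, i.e. rel_interior K.\<close>
definition body_positive :: "'a::euclidean_space set \<Rightarrow> ('a \<Rightarrow> 'a) \<Rightarrow> bool" where
  "body_positive K \<Phi> \<longleftrightarrow> \<Phi> ` K \<subseteq> K"

definition strictly_body_positive :: "'a::euclidean_space set \<Rightarrow> ('a \<Rightarrow> 'a) \<Rightarrow> bool" where
  "strictly_body_positive K \<Phi> \<longleftrightarrow> \<Phi> ` K \<subseteq> rel_interior K"

definition body_primitive :: "'a::euclidean_space set \<Rightarrow> ('a \<Rightarrow> 'a) \<Rightarrow> bool" where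
  "body_primitive K \<Phi> \<longleftrightarrow> affine_self_map (affine hull K) \<Phi> \<and> body_positive K \<Phi>
     \<and> (\<exists>k\<ge>1. strictly_body_positive K (\<Phi> ^^ k))"

definition gamma_aff_map :: "'a::euclidean_space set \<Rightarrow> ('a \<Rightarrow> 'a) \<Rightarrow> nat" where
  "gamma_aff_map K \<Phi> = (LEAST k. k \<ge> 1 \<and> strictly_body_positive K (\<Phi> ^^ k))"

definition gamma_aff :: "'a::euclidean_space set \<Rightarrow> enat" where
  "gamma_aff K = (SUP \<Phi> \<in> {\<Phi>. body_primitive K \<Phi>}. enat (gamma_aff_map K \<Phi>))"

end

theory Submission
  imports Defs
begin

(* For a sole K = {x \<in> C. u \<bullet> x = \<alpha>}, radial projection identifies C - {0} with
   (0, \<infinity>) \<times> K and int C with (0, \<infinity>) \<times> relint K. Hence if a linear map \<Psi> agrees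
   with \<rho> \<Phi> on K (\<rho> > 0) and \<Phi> maps K into itself, then \<Psi> is C-positive and, for
   every n, \<Psi>^n is strictly C-positive iff \<Phi>^n is strictly K-positive; so the two maps
   have the same exponent.
   A K-primitive affine map x \<mapsto> L x + b extends to the linear map
   x \<mapsto> L x + (u \<bullet> x / \<alpha>) b. Conversely, for a C-primitive \<Psi>, Brouwer's theorem
   applied to the normalised adjoint on the compact convex base {g \<in> C*. g \<bullet> e = 1} of the
   dual cone yields an eigenvector f of the adjoint with eigenvalue \<rho> > 0; primitivity
   puts f in int C*, and \<Psi> / \<rho> maps the sole {x \<in> C. f \<bullet> x = 1} into itself. *)

lemma linear_funpow: "linear (f :: 'a::real_vector \<Rightarrow> 'a) \<Longrightarrow> linear (f ^^ n)"
  by (induction n) (auto simp: linear_compose[of _ f, unfolded o_def] linear_iff)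

lemma cone_scaleR_interior:
  fixes C :: "'a::real_normed_vector set"
  assumes "cone C" "y \<in> interior C" "t > 0"
  shows "t *\<^sub>R y \<in> interior C"
proof -
  have "(*\<^sub>R) t ` interior C \<subseteq> interior C"
  proof (rule interior_maximal)
    show "(*\<^sub>R) t ` interior C \<subseteq> C"
      using assms(1,3) interior_subset by (fastforce intro: mem_cone)
  qed (use assms(3) in auto)
  with assms(2) show ?thesis by blast
qed

lemma closed_dual_cone: "closed (dual_cone C)"
proof -
  have "dual_cone C = (\<Inter>x\<in>C. {g. x \<bullet> g \<ge> 0})"
    by (auto simp: dual_cone_def inner_commute)
  then show ?thesis by (simp add: closed_INT closed_halfspace_ge)
qed

lemma convex_dual_cone: "convex (dual_cone C)"
  unfolding convex_def dual_cone_def by (auto simp: inner_add_left)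

lemma subset_dual_dual_cone: "C \<subseteq> dual_cone (dual_cone C)"
  by (auto simp: dual_cone_def inner_commute)

lemma cone_dual_cone: "cone (dual_cone C)"
  unfolding cone_def dual_cone_def by auto

lemma dual_cone_inner_ge_norm:
  assumes "r \<ge> 0" "cball e r \<subseteq> C" "g \<in> dual_cone C"
  shows "r * norm g \<le> g \<bullet> e"
proof (cases "g = 0")
  case False
  define z where "z = e - (r / norm g) *\<^sub>R g"
  have "z \<in> C" using assms(1,2) False by (auto simp: z_def dist_norm)
  then have "0 \<le> g \<bullet> z" using assms(3) by (auto simp: dual_cone_def)
  also have "g \<bullet> z = g \<bullet> e - r * norm g"
    using False by (simp add: z_def inner_diff_right dot_square_norm power2_eq_square)
  finally show ?thesis by simp
qed simp

lemma dual_cone_inner_interior_pos: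
  assumes "g \<in> dual_cone C" "g \<noteq> 0" "y \<in> interior C"
  shows "0 < g \<bullet> y"
proof -
  obtain r where "r > 0" "cball y r \<subseteq> C" using assms(3) mem_interior_cball by blast
  then have "r * norm g \<le> g \<bullet> y" using dual_cone_inner_ge_norm[of r y C g] assms(1) by simp
  moreover have "0 < r * norm g" using \<open>r > 0\<close> assms(2) by simp
  ultimately show ?thesis by linarith
qed

lemma interior_dual_cone_inner_pos:
  assumes "u \<in> interior (dual_cone C)" "x \<in> C" "x \<noteq> 0"
  shows "0 < u \<bullet> x"
  using dual_cone_inner_interior_pos[of x "dual_cone C" u] subset_dual_dual_cone assms
  by (auto simp: inner_commute)

lemma interior_dual_coneI:
  assumes "cone C" "closed C" and pos: "\<And>x. x \<in> C \<Longrightarrow> x \<noteq> 0 \<Longrightarrow> 0 < u \<bullet> x"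
  shows "u \<in> interior (dual_cone C)"
proof -
  define D where "D = C \<inter> sphere 0 1"
  obtain \<mu> where \<mu>: "\<mu> > 0" "\<And>y. y \<in> D \<Longrightarrow> \<mu> \<le> u \<bullet> y"
  proof (cases "D = {}")
    case True
    then show ?thesis using that[of 1] by simp
  next
    case False
    have "compact D" using assms(2) by (simp add: D_def closed_Int_compact)
    moreover have "continuous_on D ((\<bullet>) u)" by (intro continuous_intros)
    ultimately obtain m where m: "m \<in> D" "\<And>y. y \<in> D \<Longrightarrow> u \<bullet> m \<le> u \<bullet> y"
      using continuous_attains_inf[OF _ False] by blast
    moreover have "0 < u \<bullet> m" using m(1) pos[of m] by (cases "m = 0") (auto simp: D_def)
    ultimately show ?thesis using that by blast
  qed
  have ge: "\<mu> * norm x \<le> u \<bullet> x" if "x \<in> C" for x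
  proof (cases "x = 0")
    case False
    then have "(1 / norm x) *\<^sub>R x \<in> D" using assms(1) that by (simp add: D_def mem_cone)
    then have "\<mu> \<le> (u \<bullet> x) / norm x" using \<mu>(2) by fastforce
    then show ?thesis using False by (simp add: pos_le_divide_eq)
  qed simp
  have "ball u \<mu> \<subseteq> dual_cone C"
  proof (clarsimp simp: dual_cone_def)
    fix v x assume "dist u v < \<mu>" "x \<in> C"
    then have "norm (v - u) * norm x \<le> \<mu> * norm x"
      by (simp add: dist_norm norm_minus_commute mult_right_mono)
    moreover have "\<bar>(v - u) \<bullet> x\<bar> \<le> norm (v - u) * norm x" by (rule Cauchy_Schwarz_ineq2)
    ultimately show "0 \<le> v \<bullet> x" using ge[OF \<open>x \<in> C\<close>] by (simp add: inner_diff_left)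
  qed
  then show ?thesis using \<mu>(1) by (meson mem_interior)
qed

lemma dual_cone_separation:
  fixes C :: "'a::euclidean_space set"
  assumes "convex C" "closed C" "cone C" "C \<noteq> {}" "y \<notin> C"
  obtains a where "a \<in> dual_cone C" "a \<bullet> y < 0"
proof -
  obtain a b where ab: "a \<bullet> y < b" "\<And>x. x \<in> C \<Longrightarrow> b < a \<bullet> x"
    using separating_hyperplane_closed_point[OF assms(1,2,5)] by blast
  have "0 \<in> C" using cone_contains_0[OF assms(3)] assms(4) by blast
  then have "b < 0" using ab(2) by force
  have "0 \<le> a \<bullet> x" if "x \<in> C" for x
  proof (rule ccontr)
    assume "\<not> 0 \<le> a \<bullet> x"
    then have "a \<bullet> ((b / (a \<bullet> x)) *\<^sub>R x) = b" "b / (a \<bullet> x) \<ge> 0"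
      using \<open>b < 0\<close> by (auto simp: divide_nonpos_neg)
    then show False using ab(2) mem_cone[OF assms(3) that] by fastforce
  qed
  then show ?thesis using that[of a] ab(1) \<open>b < 0\<close> by (auto simp: dual_cone_def)
qed

lemma compact_dual_cone_slice:
  assumes "e \<in> interior C"
  shows "compact {g \<in> dual_cone C. g \<bullet> e = 1}"
proof -
  obtain r where r: "r > 0" "cball e r \<subseteq> C" using assms mem_interior_cball by blast
  have "norm g \<le> 1 / r" if "g \<in> dual_cone C" "g \<bullet> e = 1" for g
    using dual_cone_inner_ge_norm[of r, OF _ r(2) that(1)] that(2) r(1) by (simp add: field_simps)
  then have "{g \<in> dual_cone C. g \<bullet> e = 1} \<subseteq> cball 0 (1 / r)" by auto
  moreover have "{g \<in> dual_cone C. g \<bullet> e = 1} = dual_cone C \<inter> {g. e \<bullet> g = 1}"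
    by (auto simp: inner_commute)
  ultimately show ?thesis
    by (metis bounded_cball bounded_subset closed_Int closed_dual_cone closed_hyperplane
        compact_eq_bounded_closed)
qed

lemma proper_coneD:
  assumes "proper_cone C"
  shows "convex C" "cone C" "closed C" "0 \<in> C"
  using assms unfolding proper_cone_def by blast+

lemma proper_cone_salient:
  assumes "proper_cone C" "x \<in> C" "-x \<in> C"
  shows "x = 0"
proof -
  have "x \<in> C \<inter> uminus ` C" using assms(2,3) by (metis IntI image_eqI minus_minus)
  then show ?thesis using assms(1) unfolding proper_cone_def by blast
qed

lemma rel_interior_proper_cone:
  assumes "proper_cone C"
  shows "rel_interior C = interior C"
proof (rule rel_interior_interior)
  have "v \<in> span C" for v
  proof -
    have "v \<in> {x - y | x y. x \<in> C \<and> y \<in> C}" using assms by (simp add: proper_cone_def)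
    then obtain x y where "v = x - y" "x \<in> C" "y \<in> C" by blast
    then show ?thesis by (simp add: span_base span_diff)
  qed
  then show "affine hull C = UNIV"
    using proper_coneD(4)[OF assms] by (auto simp: affine_hull_span_0 hull_inc)
qed

lemma interior_proper_cone_nonempty:
  assumes "proper_cone C"
  shows "interior C \<noteq> {}"
  using rel_interior_proper_cone[OF assms] proper_coneD[OF assms] rel_interior_eq_empty
  by blast

lemma interior_proper_cone_nonzero:
  assumes "proper_cone C" "e \<in> interior C"
  shows "e \<noteq> 0"
proof
  assume "e = 0"
  then obtain r where "r > 0" "cball 0 r \<subseteq> C" using assms(2) mem_interior_cball by blast
  moreover obtain b :: 'a where "b \<in> Basis" using nonempty_Basis by blast
  ultimately have "r *\<^sub>R b \<in> C" "- (r *\<^sub>R b) \<in> C" by auto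
  then have "r *\<^sub>R b = 0" using proper_cone_salient[OF assms(1)] by blast
  then show False using \<open>r > 0\<close> \<open>b \<in> Basis\<close> by auto
qed

lemma sole_radial_projection:
  assumes "cone C" "u \<in> interior (dual_cone C)" "\<alpha> > 0" "x \<in> C" "x \<noteq> 0"
  obtains t z where "t > 0" "z \<in> C" "u \<bullet> z = \<alpha>" "x = t *\<^sub>R z"
proof
  have ux: "u \<bullet> x > 0" using interior_dual_cone_inner_pos[OF assms(2,4,5)] .
  show "u \<bullet> x / \<alpha> > 0" "(\<alpha> / (u \<bullet> x)) *\<^sub>R x \<in> C" "u \<bullet> ((\<alpha> / (u \<bullet> x)) *\<^sub>R x) = \<alpha>"
    using ux assms(1,3,4) by (auto intro: mem_cone)
  show "x = (u \<bullet> x / \<alpha>) *\<^sub>R (\<alpha> / (u \<bullet> x)) *\<^sub>R x" using ux assms(3) by simp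
qed

lemma rel_interior_sole:
  assumes "proper_cone C" "u \<in> interior (dual_cone C)" "\<alpha> > 0"
  shows "rel_interior {x \<in> C. u \<bullet> x = \<alpha>} = interior C \<inter> {x. u \<bullet> x = \<alpha>}"
proof -
  have hyperplane: "convex {x. u \<bullet> x = \<alpha>}" "rel_interior {x. u \<bullet> x = \<alpha>} = {x. u \<bullet> x = \<alpha>}"
    by (simp_all add: affine_hyperplane affine_imp_convex rel_interior_affine)
  obtain e where e: "e \<in> interior C" using interior_proper_cone_nonempty[OF assms(1)] by blast
  then obtain t z where "t > 0" "u \<bullet> z = \<alpha>" "e = t *\<^sub>R z"
    using sole_radial_projection[OF proper_coneD(2)[OF assms(1)] assms(2,3)]
      interior_proper_cone_nonzero[OF assms(1)] interior_subset by blast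
  then have "z \<in> interior C \<inter> {x. u \<bullet> x = \<alpha>}"
    using cone_scaleR_interior[OF proper_coneD(2)[OF assms(1)] e, of "1 / t"] by simp
  then have "rel_interior C \<inter> rel_interior {x. u \<bullet> x = \<alpha>} \<noteq> {}"
    using rel_interior_proper_cone[OF assms(1)] hyperplane(2) by blast
  then have "rel_interior (C \<inter> {x. u \<bullet> x = \<alpha>}) = interior C \<inter> {x. u \<bullet> x = \<alpha>}"
    using convex_rel_interior_inter_two[OF proper_coneD(1)[OF assms(1)] hyperplane(1)]
      rel_interior_proper_cone[OF assms(1)] hyperplane(2) by simp
  moreover have "{x \<in> C. u \<bullet> x = \<alpha>} = C \<inter> {x. u \<bullet> x = \<alpha>}" by auto
  ultimately show ?thesis by simp
qed

lemma dual_cone_slice_nonempty: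
  assumes "proper_cone C" "e \<in> interior C"
  obtains g where "g \<in> dual_cone C" "g \<bullet> e = 1"
proof -
  have "e \<in> C" "e \<noteq> 0"
    using assms interior_subset interior_proper_cone_nonzero by blast+
  then have "-e \<notin> C" using proper_cone_salient[OF assms(1)] by blast
  moreover have "C \<noteq> {}" using proper_coneD(4)[OF assms(1)] by blast
  ultimately obtain a where a: "a \<in> dual_cone C" "a \<bullet> (-e) < 0"
    using dual_cone_separation proper_coneD[OF assms(1)] by metis
  show ?thesis
  proof
    show "(1 / (a \<bullet> e)) *\<^sub>R a \<in> dual_cone C"
      using a by (simp add: mem_cone[OF cone_dual_cone])
    show "(1 / (a \<bullet> e)) *\<^sub>R a \<bullet> e = 1"
      using a(2) by simp
  qed
qed

lemma linear_affine_self_map: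
  fixes \<Phi> :: "'a::euclidean_space \<Rightarrow> 'a"
  assumes "linear \<Phi>" "\<Phi> ` K \<subseteq> K"
  shows "affine_self_map (affine hull K) \<Phi>"
  unfolding affine_self_map_def
proof
  have "\<Phi> ` (affine hull K) = affine hull (\<Phi> ` K)"
    using assms(1) by (simp add: affine_hull_linear_image linear_conv_bounded_linear)
  also have "\<dots> \<subseteq> affine hull K" using assms(2) by (rule hull_mono)
  finally show "\<Phi> ` (affine hull K) \<subseteq> affine hull K" .
  show "\<exists>L b. linear L \<and> (\<forall>x\<in>affine hull K. \<Phi> x = L x + b)"
    using assms(1) by (intro exI[of _ \<Phi>] exI[of _ 0]) simp
qed

locale sole_extension =
  fixes C :: "'a::euclidean_space set" and u :: 'a and \<alpha> :: real and K :: "'a set"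
    and \<Phi> \<Psi> :: "'a \<Rightarrow> 'a" and \<rho> :: real
  assumes proper: "proper_cone C"
    and u: "u \<in> interior (dual_cone C)" and \<alpha>: "\<alpha> > 0"
    and sole: "K = {x \<in> C. u \<bullet> x = \<alpha>}"
    and maps_sole: "\<Phi> ` K \<subseteq> K"
    and linear: "linear \<Psi>" and \<rho>: "\<rho> > 0"
    and extends: "\<And>z. z \<in> K \<Longrightarrow> \<Psi> z = \<rho> *\<^sub>R \<Phi> z"
begin

lemma sole_in_soles: "K \<in> soles C"
  using u \<alpha> by (auto simp: soles_def sole)

lemma radial_projection:
  assumes "x \<in> C" "x \<noteq> 0"
  obtains t z where "t > 0" "z \<in> K" "x = t *\<^sub>R z"
  using sole_radial_projection[OF proper_coneD(2)[OF proper] u \<alpha> assms] sole by blast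

lemma funpow_maps_sole: "z \<in> K \<Longrightarrow> (\<Phi> ^^ n) z \<in> K"
  by (induction n) (use maps_sole in auto)

lemma funpow_extends:
  assumes "z \<in> K"
  shows "(\<Psi> ^^ n) z = \<rho> ^ n *\<^sub>R (\<Phi> ^^ n) z"
proof (induction n)
  case (Suc n)
  have "(\<Psi> ^^ Suc n) z = \<rho> ^ n *\<^sub>R \<Psi> ((\<Phi> ^^ n) z)"
    using Suc linear_scale[OF linear] by simp
  also have "\<dots> = \<rho> ^ Suc n *\<^sub>R (\<Phi> ^^ Suc n) z"
    using extends[OF funpow_maps_sole[OF assms]] by simp
  finally show ?case .
qed simp

lemma cone_positive: "cone_positive C \<Psi>"
  unfolding cone_positive_def
proof (rule image_subsetI)
  fix x assume "x \<in> C"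
  show "\<Psi> x \<in> C"
  proof (cases "x = 0")
    case True
    then show ?thesis using linear_0[OF linear] proper_coneD(4)[OF proper] by simp
  next
    case False
    then obtain t z where tz: "t > 0" "z \<in> K" "x = t *\<^sub>R z"
      using radial_projection \<open>x \<in> C\<close> by blast
    then have "\<Psi> x = (t * \<rho>) *\<^sub>R \<Phi> z" using extends linear_scale[OF linear] by simp
    moreover have "\<Phi> z \<in> C" using maps_sole tz(2) sole by blast
    ultimately show ?thesis using mem_cone[OF proper_coneD(2)[OF proper]] tz(1) \<rho> by simp
  qed
qed

lemma strictly_positive_funpow_iff:
  "strictly_body_positive K (\<Phi> ^^ n) \<longleftrightarrow> strictly_cone_positive C (\<Psi> ^^ n)"
proof
  have rel_interior_K: "rel_interior K = interior C \<inter> {x. u \<bullet> x = \<alpha>}"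
    using rel_interior_sole[OF proper u \<alpha>] sole by simp
  note cone = proper_coneD(2)[OF proper]
  show "strictly_cone_positive C (\<Psi> ^^ n)" if "strictly_body_positive K (\<Phi> ^^ n)"
    unfolding strictly_cone_positive_def
  proof (rule image_subsetI)
    fix x assume "x \<in> C - {0}"
    then obtain t z where tz: "t > 0" "z \<in> K" "x = t *\<^sub>R z" using radial_projection by blast
    have "(\<Phi> ^^ n) z \<in> interior C"
      using that tz(2) rel_interior_K by (auto simp: strictly_body_positive_def)
    moreover have "(\<Psi> ^^ n) x = (t * \<rho> ^ n) *\<^sub>R (\<Phi> ^^ n) z"
      using tz linear_scale[OF linear_funpow[OF linear]] funpow_extends by simp
    ultimately show "(\<Psi> ^^ n) x \<in> interior C"
      using cone_scaleR_interior[OF cone] tz(1) \<rho> by simp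
  qed
  show "strictly_body_positive K (\<Phi> ^^ n)" if "strictly_cone_positive C (\<Psi> ^^ n)"
    unfolding strictly_body_positive_def
  proof (rule image_subsetI)
    fix z assume "z \<in> K"
    then have "z \<in> C - {0}" using sole \<alpha> by auto
    then have "\<rho> ^ n *\<^sub>R (\<Phi> ^^ n) z \<in> interior C"
      using that funpow_extends[OF \<open>z \<in> K\<close>] by (auto simp: strictly_cone_positive_def)
    then have "(1 / \<rho> ^ n) *\<^sub>R (\<rho> ^ n *\<^sub>R (\<Phi> ^^ n) z) \<in> interior C"
      by (rule cone_scaleR_interior[OF cone]) (use \<rho> in simp)
    then have "(\<Phi> ^^ n) z \<in> interior C" using \<rho> by simp
    then show "(\<Phi> ^^ n) z \<in> rel_interior K"
      using funpow_maps_sole[OF \<open>z \<in> K\<close>] rel_interior_K sole by auto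
  qed
qed

lemma gamma_aff_map_eq: "gamma_aff_map K \<Phi> = gamma_map C \<Psi>"
  unfolding gamma_aff_map_def gamma_map_def strictly_positive_funpow_iff ..

lemma body_primitive_iff_cone_primitive:
  assumes "affine_self_map (affine hull K) \<Phi>"
  shows "body_primitive K \<Phi> \<longleftrightarrow> cone_primitive C \<Psi>"
  using assms maps_sole linear cone_positive
  unfolding body_primitive_def body_positive_def cone_primitive_def strictly_positive_funpow_iff
  by blast

end

lemma dual_cone_slice_eigenvector:
  fixes C :: "'a::euclidean_space set"
  assumes "proper_cone C" "e \<in> interior C" "linear A"
    and maps_dual: "\<And>g. g \<in> dual_cone C \<Longrightarrow> A g \<in> dual_cone C"
    and pos: "\<And>g. g \<in> dual_cone C \<Longrightarrow> g \<bullet> e = 1 \<Longrightarrow> 0 < A g \<bullet> e"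
  obtains g \<rho> where "g \<in> dual_cone C" "g \<bullet> e = 1" "\<rho> > 0" "A g = \<rho> *\<^sub>R g"
proof -
  define S where "S = {g \<in> dual_cone C. g \<bullet> e = 1}"
  define T where "T g = (1 / (A g \<bullet> e)) *\<^sub>R A g" for g
  have S_pos: "0 < A g \<bullet> e" if "g \<in> S" for g
    using pos that by (simp add: S_def)
  have "continuous_on S A"
    using assms(3) by (simp add: linear_continuous_on linear_conv_bounded_linear)
  then have T_cont: "continuous_on S T"
    unfolding T_def by (intro continuous_intros) (use S_pos in force)+
  have T_maps: "T \<in> S \<rightarrow> S"
  proof
    fix g assume "g \<in> S"
    then have Ag: "0 < A g \<bullet> e" "A g \<in> dual_cone C" using S_pos maps_dual by (auto simp: S_def)
    then have "T g \<in> dual_cone C" unfolding T_def by (intro mem_cone[OF cone_dual_cone]) simp_all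
    moreover have "T g \<bullet> e = 1" using Ag(1) by (simp add: T_def)
    ultimately show "T g \<in> S" by (simp add: S_def)
  qed
  have S: "compact S" "convex S" "S \<noteq> {}"
    using compact_dual_cone_slice[OF assms(2)] dual_cone_slice_nonempty[OF assms(1,2)]
      convex_Int[OF convex_dual_cone convex_hyperplane[of e 1]]
    by (auto simp: S_def inner_commute Int_def)
  obtain g where g: "g \<in> S" "T g = g" using brouwer[OF S T_cont T_maps] .
  define \<rho> where "\<rho> = A g \<bullet> e"
  have "A g = \<rho> *\<^sub>R T g" using S_pos[OF g(1)] by (simp add: T_def \<rho>_def)
  then have "A g = \<rho> *\<^sub>R g" using g(2) by simp
  moreover have "\<rho> > 0" using S_pos[OF g(1)] by (simp add: \<rho>_def)
  ultimately show ?thesis using that g(1) unfolding S_def by blast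
qed

lemma cone_primitive_dual_eigenvector:
  fixes C :: "'a::euclidean_space set"
  assumes "proper_cone C" "cone_primitive C \<Psi>"
  obtains g \<rho> where "g \<in> dual_cone C" "g \<noteq> 0" "\<rho> > 0" "\<And>x. g \<bullet> \<Psi> x = \<rho> * (g \<bullet> x)"
proof -
  have lin: "linear \<Psi>" and pos: "\<Psi> ` C \<subseteq> C"
    using assms(2) by (auto simp: cone_primitive_def cone_positive_def)
  obtain k where "k \<ge> 1" and k: "strictly_cone_positive C (\<Psi> ^^ k)"
    using assms(2) by (auto simp: cone_primitive_def)
  then obtain j where j: "k = Suc j" by (cases k) auto
  define A where "A = adjoint \<Psi>"
  have A: "A g \<bullet> x = g \<bullet> \<Psi> x" for g x
    using adjoint_works[OF lin, of x g] by (simp add: A_def inner_commute)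
  obtain e where e: "e \<in> interior C" using interior_proper_cone_nonempty[OF assms(1)] by blast
  have "e \<in> C - {0}" using e interior_subset interior_proper_cone_nonzero[OF assms(1)] by blast
  have A_dual: "A g \<in> dual_cone C" if "g \<in> dual_cone C" for g
    using that pos by (auto simp: dual_cone_def A)
  have A_pos: "0 < A g \<bullet> e" if g: "g \<in> dual_cone C" "g \<bullet> e = 1" for g
  proof -
    have "g \<noteq> 0" using g(2) by auto
    then have "0 < g \<bullet> (\<Psi> ^^ k) e"
      using k \<open>e \<in> C - {0}\<close> dual_cone_inner_interior_pos[OF g(1)]
      by (auto simp: strictly_cone_positive_def)
    then have "A g \<noteq> 0" using A[of g "(\<Psi> ^^ j) e"] j by auto
    then show ?thesis using dual_cone_inner_interior_pos[OF A_dual[OF g(1)] _ e] by blast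
  qed
  obtain g \<rho> where g: "g \<in> dual_cone C" "g \<bullet> e = 1" "\<rho> > 0" "A g = \<rho> *\<^sub>R g"
    using dual_cone_slice_eigenvector[OF assms(1) e adjoint_linear[OF lin, folded A_def] A_dual A_pos]
    by blast
  moreover have "g \<noteq> 0" using g(2) by auto
  moreover have "g \<bullet> \<Psi> x = \<rho> * (g \<bullet> x)" for x using A[of g x] g(4) by simp
  ultimately show ?thesis using that by blast
qed

lemma dual_eigenvector_interior_dual_cone:
  fixes C :: "'a::euclidean_space set"
  assumes "proper_cone C" "cone_primitive C \<Psi>" "g \<in> dual_cone C" "g \<noteq> 0"
    and eigen: "\<And>x. g \<bullet> \<Psi> x = \<rho> * (g \<bullet> x)"
  shows "g \<in> interior (dual_cone C)"
proof (rule interior_dual_coneI[OF proper_coneD(2,3)[OF assms(1)]])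
  fix x assume "x \<in> C" "x \<noteq> 0"
  obtain k where k: "strictly_cone_positive C (\<Psi> ^^ k)"
    using assms(2) by (auto simp: cone_primitive_def)
  have "g \<bullet> (\<Psi> ^^ n) x = \<rho> ^ n * (g \<bullet> x)" for n
    by (induction n) (simp_all add: eigen)
  moreover have "0 < g \<bullet> (\<Psi> ^^ k) x"
    using k \<open>x \<in> C\<close> \<open>x \<noteq> 0\<close> dual_cone_inner_interior_pos[OF assms(3,4)]
    by (auto simp: strictly_cone_positive_def)
  moreover have "0 \<le> g \<bullet> x" using assms(3) \<open>x \<in> C\<close> by (auto simp: dual_cone_def)
  ultimately show "0 < g \<bullet> x" by (metis less_eq_real_def mult_zero_right order_less_irrefl)
qed

lemma cone_primitive_imp_body_primitive:
  fixes C :: "'a::euclidean_space set"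
  assumes "proper_cone C" "cone_primitive C \<Psi>"
  obtains K \<Phi> where "K \<in> soles C" "body_primitive K \<Phi>" "gamma_aff_map K \<Phi> = gamma_map C \<Psi>"
proof -
  obtain g \<rho> where g: "g \<in> dual_cone C" "g \<noteq> 0" "\<rho> > 0" "\<And>x. g \<bullet> \<Psi> x = \<rho> * (g \<bullet> x)"
    using cone_primitive_dual_eigenvector[OF assms] by blast
  define K where "K = {x \<in> C. g \<bullet> x = 1}"
  define \<Phi> where "\<Phi> x = (1 / \<rho>) *\<^sub>R \<Psi> x" for x
  have lin: "linear \<Psi>" and pos: "\<Psi> ` C \<subseteq> C"
    using assms(2) by (auto simp: cone_primitive_def cone_positive_def)
  have "linear \<Phi>"
    using lin unfolding \<Phi>_def linear_conv_bounded_linear by (rule bounded_linear_const_scaleR)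
  moreover have "\<Phi> ` K \<subseteq> K"
    using pos g(3,4) mem_cone[OF proper_coneD(2)[OF assms(1)]] by (auto simp: K_def \<Phi>_def)
  moreover have "g \<in> interior (dual_cone C)"
    using dual_eigenvector_interior_dual_cone[OF assms g(1,2,4)] .
  ultimately interpret sole_extension C g 1 K \<Phi> \<Psi> \<rho>
    by (intro sole_extension.intro) (use assms(1) lin g(3) in \<open>auto simp: K_def \<Phi>_def\<close>)
  show ?thesis
    using that sole_in_soles gamma_aff_map_eq assms(2) body_primitive_iff_cone_primitive
      linear_affine_self_map[OF \<open>linear \<Phi>\<close> maps_sole] by blast
qed

lemma body_primitive_imp_cone_primitive:
  fixes C :: "'a::euclidean_space set"
  assumes "proper_cone C" "K \<in> soles C" "body_primitive K \<Phi>"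
  obtains \<Psi> where "cone_primitive C \<Psi>" "gamma_map C \<Psi> = gamma_aff_map K \<Phi>"
proof -
  obtain u \<alpha> where u: "u \<in> interior (dual_cone C)" "\<alpha> > 0" "K = {x \<in> C. u \<bullet> x = \<alpha>}"
    using assms(2) by (auto simp: soles_def)
  obtain L b where L: "linear L" "\<And>x. x \<in> affine hull K \<Longrightarrow> \<Phi> x = L x + b"
    using assms(3) by (auto simp: body_primitive_def affine_self_map_def)
  define \<Psi> where "\<Psi> x = L x + ((u \<bullet> x) / \<alpha>) *\<^sub>R b" for x
  have "linear \<Psi>"
    unfolding linear_iff \<Psi>_def using linear_add[OF L(1)] linear_scale[OF L(1)]
    by (simp add: algebra_simps inner_add_right add_divide_distrib scaleR_add_left)
  moreover have "\<Psi> z = 1 *\<^sub>R \<Phi> z" if "z \<in> K" for z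
    using that u L(2)[OF hull_inc[OF that]] by (simp add: \<Psi>_def)
  ultimately interpret sole_extension C u \<alpha> K \<Phi> \<Psi> 1
    using assms(1,3) u
    by (intro sole_extension.intro) (auto simp: body_primitive_def body_positive_def)
  show ?thesis
    using that assms(3) gamma_aff_map_eq body_primitive_iff_cone_primitive
    by (auto simp: body_primitive_def)
qed

theorem proposition2:
  fixes C :: "'a::euclidean_space set"
  assumes "proper_cone C"
  shows "gamma_cone C = (SUP K \<in> soles C. gamma_aff K)"
proof (rule antisym)
  show "gamma_cone C \<le> (SUP K \<in> soles C. gamma_aff K)"
    unfolding gamma_cone_def
  proof (rule SUP_least, clarify)
    fix \<Psi> assume "cone_primitive C \<Psi>"
    then obtain K \<Phi> where K: "K \<in> soles C" "body_primitive K \<Phi>" "gamma_aff_map K \<Phi> = gamma_map C \<Psi>"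
      using cone_primitive_imp_body_primitive[OF assms] by metis
    then have "enat (gamma_map C \<Psi>) \<le> gamma_aff K"
      unfolding gamma_aff_def by (metis SUP_upper mem_Collect_eq)
    also have "\<dots> \<le> (SUP K \<in> soles C. gamma_aff K)" using K(1) by (rule SUP_upper)
    finally show "enat (gamma_map C \<Psi>) \<le> (SUP K \<in> soles C. gamma_aff K)" .
  qed
  show "(SUP K \<in> soles C. gamma_aff K) \<le> gamma_cone C"
    unfolding gamma_aff_def
  proof (intro SUP_least, clarify)
    fix K \<Phi> assume "K \<in> soles C" "body_primitive K \<Phi>"
    then obtain \<Psi> where "cone_primitive C \<Psi>" "gamma_map C \<Psi> = gamma_aff_map K \<Phi>"
      using body_primitive_imp_cone_primitive[OF assms] by metis
    then show "enat (gamma_aff_map K \<Phi>) \<le> gamma_cone C"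
      unfolding gamma_cone_def by (metis SUP_upper mem_Collect_eq)
  qed
qed

end
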